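(* Assume that predictions are made at $n_p$ locations $s_{p,1},\dots,s_{p,n_p}$ with covariate data $X_p$. When applying the Vecchia approximation to the joint response vector $(y_p,y)^T$ with the predicted response $y_p$ appearing first in the ordering, the conditional distribution $y_p|y$ is given by \[y_p|y\sim \mathcal{N} \left( \mu_p , \Xi_p\right),\] with \begin{equation*} \begin{split} \mu_p=& F(X_p)- \left(B_p^T{D_p}^{-1}B_p + B_{op}^T{D_o}^{-1}B_{op}\right)^{-1}B_{op}^T{D_o}^{-1}B_o\left(y-F(X)\right)\\ \Xi_p=& \left(B_p^T{D_p}^{-1}B_p + B_{op}^T{D_o}^{-1}B_{op}\right)^{-1}, \end{split} \end{equation*} where $B_{o},D_o\in\mathbb{R}^{n\times n}$, $B_{op}\in\mathbb{R}^{n\times n_p}$, $B_p,D_p\in\mathbb{R}^{n_p\times n_p}$ are the following submatrices of the Vecchia approximated precision matrix $\tilde{Cov}\left((y_p,y)^T\right)^{-1}$: $$ \tilde{Cov}\left((y_p,y)^T\right)^{-1}= \begin{pmatrix} B_p & 0 \\ B_{op}&B_o\end{pmatrix}^T \begin{pmatrix} {D_p}^{-1} & 0 \\0&{D_o}^{-1}\end{pmatrix} \begin{pmatrix} B_p & 0 \\ B_{op}&B_o\end{pmatrix}. $$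
   Context: Model: $y=F(X)+Zb+\epsilon$, $b\sim\mathcal{N}(0,\Sigma)$, $\epsilon\sim\mathcal{N}(0,\sigma^2 I_n)$, with $y\in\mathbb{R}^n$, where $b$ contains a Gaussian process with covariance function $c(\cdot,\cdot)$. Vecchia approximation of a response vector with given ordering: $p(y|F,\theta)\approx\prod_{i} p(y_i|y_{N(i)},F,\theta)$, where $N(i)$ are the indices of the nearest neighbors of location $i$ among earlier locations in the ordering; $p(y_i|y_{N(i)},F,\theta)=\mathcal{N}(y_i\mid F_i+A_i(y_{N(i)}-F_{N(i)}),D_i)$ with $A_i=(Z\Sigma Z^T)_{i,N(i)}((Z\Sigma Z^T+\sigma^2I)_{N(i)})^{-1}$ and $D_i=(Z\Sigma Z^T+\sigma^2I)_{i,i}-A_i(Z\Sigma Z^T)_{N(i),i}$. The Cholesky-type factor is the lower triangular matrix with $1$'s on the diagonal and entries $-A_i$ in positions $(i,N(i))$, and the diagonal matrix has entries $D_i$; the approximate precision is (factor)$^T$(diagonal)$^{-1}$(factor). Here this construction is applied to the joint vector $(y_p,y)$ of the prediction variable $y_p\in\mathbb{R}^{n_p}$ (following the same model at the prediction locations) and the observed response $y$, and the resulting factors are partitioned into blocks as in the claim. *)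

theory Defs
  imports "HOL-Probability.Probability" "Jordan_Normal_Form.Determinant"
    "Jordan_Normal_Form.Gauss_Jordan_Elimination"
begin

definition minv :: "real mat \<Rightarrow> real mat" where
  "minv A = (case mat_inverse A of Some B \<Rightarrow> B | None \<Rightarrow> 0\<^sub>m (dim_row A) (dim_col A))"

definition sym_psd :: "nat \<Rightarrow> real mat \<Rightarrow> bool" where
  "sym_psd d S \<longleftrightarrow> S \<in> carrier_mat d d \<and> S\<^sup>T = S \<and>
     (\<forall>v \<in> carrier_vec d. v \<bullet> (S *\<^sub>v v) \<ge> 0)"

text \<open>K is the covariance Z Sigma Z^T of the latent part (size d x d), s2 is the
 noise variance sigma^2, Nb i is the neighbour set N(i) (a subset of the earlier indices).\<close>

definition nbl :: "(nat \<Rightarrow> nat set) \<Rightarrow> nat \<Rightarrow> nat list" where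
  "nbl Nb i = sorted_list_of_set (Nb i)"

definition sub_mat :: "real mat \<Rightarrow> nat list \<Rightarrow> nat list \<Rightarrow> real mat" where
  "sub_mat M rs cs = mat (length rs) (length cs) (\<lambda>(a,b). M $$ (rs ! a, cs ! b))"

definition sub_vec :: "real vec \<Rightarrow> nat list \<Rightarrow> real vec" where
  "sub_vec v rs = vec (length rs) (\<lambda>a. v $ (rs ! a))"

text \<open>A_i as a (column) vector indexed by the neighbours of i:
  A_i = (K)_{i,N(i)} ((K + s2 I)_{N(i)})^{-1}\<close>
definition vecchia_A :: "nat \<Rightarrow> real mat \<Rightarrow> real \<Rightarrow> (nat \<Rightarrow> nat set) \<Rightarrow> nat \<Rightarrow> real vec" where
  "vecchia_A d K s2 Nb i =
     (let ns = nbl Nb i;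
          Kn = sub_mat (K + s2 \<cdot>\<^sub>m 1\<^sub>m d) ns ns;
          k = vec (length ns) (\<lambda>a. K $$ (i, ns ! a))
      in (minv Kn)\<^sup>T *\<^sub>v k)"

definition vecchia_D :: "nat \<Rightarrow> real mat \<Rightarrow> real \<Rightarrow> (nat \<Rightarrow> nat set) \<Rightarrow> nat \<Rightarrow> real" where
  "vecchia_D d K s2 Nb i =
     (let ns = nbl Nb i
      in K $$ (i,i) + s2 - vecchia_A d K s2 Nb i \<bullet> vec (length ns) (\<lambda>a. K $$ (ns ! a, i)))"

definition vecchia_B :: "nat \<Rightarrow> real mat \<Rightarrow> real \<Rightarrow> (nat \<Rightarrow> nat set) \<Rightarrow> real mat" where
  "vecchia_B d K s2 Nb = mat d d (\<lambda>(i,j).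
     if i = j then 1
     else if j \<in> Nb i then - (vecchia_A d K s2 Nb i $ (LEAST a. nbl Nb i ! a = j))
     else 0)"

definition vecchia_Dmat :: "nat \<Rightarrow> real mat \<Rightarrow> real \<Rightarrow> (nat \<Rightarrow> nat set) \<Rightarrow> real mat" where
  "vecchia_Dmat d K s2 Nb = mat d d (\<lambda>(i,j). if i = j then vecchia_D d K s2 Nb i else 0)"

text \<open>Vecchia-approximated density of a response vector x (mean vector F):
  prod_i N(x_i | F_i + A_i (x_{N(i)} - F_{N(i)}), D_i).  normal_density takes the
  standard deviation.\<close>
definition vecchia_density ::
  "nat \<Rightarrow> real mat \<Rightarrow> real \<Rightarrow> (nat \<Rightarrow> nat set) \<Rightarrow> real vec \<Rightarrow> real vec \<Rightarrow> real" where
  "vecchia_density d K s2 Nb F x =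
     (\<Prod>i<d. normal_density
        (F $ i + vecchia_A d K s2 Nb i \<bullet> (sub_vec x (nbl Nb i) - sub_vec F (nbl Nb i)))
        (sqrt (vecchia_D d K s2 Nb i)) (x $ i))"

definition cond_density_first ::
  "nat \<Rightarrow> (real vec \<Rightarrow> real) \<Rightarrow> real vec \<Rightarrow> real vec \<Rightarrow> real" where
  "cond_density_first np f yp y =
     f (yp @\<^sub>v y) / (\<integral>z. f (vec np z @\<^sub>v y) \<partial>(PiM {..<np} (\<lambda>_. lborel)))"

definition mvn_density :: "nat \<Rightarrow> real vec \<Rightarrow> real mat \<Rightarrow> real vec \<Rightarrow> real" where
  "mvn_density k mu S x =
     exp (- (1/2) * ((x - mu) \<bullet> (minv S *\<^sub>v (x - mu)))) / sqrt ((2 * pi) ^ k * det S)"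

end

theory Submission
  imports Defs
begin

(* Up to the constant prod_i (2 pi D_i)^(-1/2), the Vecchia density of x is
   exp (-1/2 sum_i ((B (x - F))_i)^2 / D_i) with B unit lower triangular, and every D_i is
   positive because it is a value of the quadratic form of the positive definite matrix
   K + sigma^2 I.  Since y_p comes first in the ordering, B has a zero upper right block,
   so writing x - F = (u, e) the exponent is u^T Q u + 2 u^T G e + e^T H e with
   Q = Bp^T Dp^-1 Bp + Bop^T Do^-1 Bop positive definite and G = Bop^T Do^-1 Bo.
   Completing the square in u shows that, for fixed y, the joint density is a constant
   times the Gaussian kernel with mean mu and precision Q.  Its integral over y_p is
   computed by integrating out one coordinate at a time, which amounts to taking
   successive Schur complements of Q, and dividing by it gives the normal density with
   covariance Xi = Q^-1. *)

section \<open>Quadratic forms and Schur complements\<close>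

definition quad_form :: "nat \<Rightarrow> (nat \<Rightarrow> nat \<Rightarrow> real) \<Rightarrow> (nat \<Rightarrow> real) \<Rightarrow> real" where
  "quad_form k Q u = (\<Sum>i<k. \<Sum>j<k. Q i j * u i * u j)"

definition pos_def_form :: "nat \<Rightarrow> (nat \<Rightarrow> nat \<Rightarrow> real) \<Rightarrow> bool" where
  "pos_def_form k Q \<longleftrightarrow>
     (\<forall>i<k. \<forall>j<k. Q i j = Q j i) \<and> (\<forall>u. (\<exists>i<k. u i \<noteq> 0) \<longrightarrow> quad_form k Q u > 0)"

definition schur_last :: "nat \<Rightarrow> (nat \<Rightarrow> nat \<Rightarrow> real) \<Rightarrow> nat \<Rightarrow> nat \<Rightarrow> real" where
  "schur_last k Q i j = Q i j - Q i k * Q k j / Q k k"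

lemma quad_form_cong:
  "(\<And>i j. i < k \<Longrightarrow> j < k \<Longrightarrow> Q i j = Q' i j) \<Longrightarrow> (\<And>i. i < k \<Longrightarrow> u i = v i) \<Longrightarrow>
   quad_form k Q u = quad_form k Q' v"
  unfolding quad_form_def by (intro sum.cong refl) auto

lemma quad_form_neg: "quad_form k Q (\<lambda>i. - u i) = quad_form k Q u"
  unfolding quad_form_def by simp

lemma quad_form_Suc:
  "quad_form (Suc k) Q u = quad_form k Q u + (\<Sum>i<k. Q i k * u i) * u k
     + (\<Sum>j<k. Q k j * u j) * u k + Q k k * u k * u k"
  unfolding quad_form_def by (simp add: sum.distrib sum_distrib_right sum_distrib_left algebra_simps)

lemma quad_form_Suc_schur_last:
  assumes sym: "\<And>i. i < k \<Longrightarrow> Q i k = Q k i" and pivot: "Q k k \<noteq> 0"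
  shows "quad_form (Suc k) Q u
     = quad_form k (schur_last k Q) u + Q k k * (u k + (\<Sum>j<k. Q k j * u j) / Q k k)^2"
proof -
  define c where "c = (\<Sum>j<k. Q k j * u j)"
  have col: "(\<Sum>i<k. Q i k * u i) = c"
    unfolding c_def by (intro sum.cong refl) (simp add: sym)
  have "(\<Sum>i<k. \<Sum>j<k. Q i k * Q k j / Q k k * u i * u j)
      = (\<Sum>i<k. Q i k * u i) * (\<Sum>j<k. Q k j * u j) / Q k k"
    by (simp add: sum_product sum_divide_distrib algebra_simps)
  also have "\<dots> = c * c / Q k k" unfolding col c_def ..
  finally have "(\<Sum>i<k. \<Sum>j<k. Q i k * Q k j / Q k k * u i * u j) = c * c / Q k k" .
  then have "quad_form k (schur_last k Q) u = quad_form k Q u - c * c / Q k k"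
    unfolding quad_form_def schur_last_def by (simp add: algebra_simps sum_subtractf)
  moreover have "Q k k * (u k + c / Q k k)^2 = Q k k * u k * u k + 2 * c * u k + c * c / Q k k"
    using pivot by (simp add: power2_eq_square field_simps)
  ultimately show ?thesis
    unfolding quad_form_Suc col c_def[symmetric] by simp
qed

lemma Least_nth_eq:
  assumes "distinct rs" "a < length rs"
  shows "(LEAST b. rs ! b = rs ! a) = a"
proof (rule Least_equality)
  show "b \<ge> a" if "rs ! b = rs ! a" for b
    using that assms nth_eq_iff_index_eq[of rs b a] by (cases "b < a") auto
qed simp

lemma quad_form_reindex:
  assumes distinct: "distinct rs" and bound: "set rs \<subseteq> {..<N}"
  shows "quad_form (length rs) (\<lambda>a b. C (rs ! a) (rs ! b)) w
       = quad_form N C (\<lambda>p. if p \<in> set rs then w (LEAST a. rs ! a = p) else 0)"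
proof -
  define x where "x = (\<lambda>p. if p \<in> set rs then w (LEAST a. rs ! a = p) else 0)"
  have bij: "bij_betw ((!) rs) {..<length rs} (set rs)"
    using distinct by (simp add: bij_betw_nth lessThan_atLeast0)
  have "quad_form N C x = (\<Sum>p\<in>set rs. \<Sum>q<N. C p q * x p * x q)"
    unfolding quad_form_def by (rule sum.mono_neutral_right) (use bound in \<open>auto simp: x_def\<close>)
  also have "\<dots> = (\<Sum>p\<in>set rs. \<Sum>q\<in>set rs. C p q * x p * x q)"
    by (intro sum.cong refl sum.mono_neutral_right) (use bound in \<open>auto simp: x_def\<close>)
  also have "\<dots> = (\<Sum>a<length rs. \<Sum>b<length rs. C (rs!a) (rs!b) * x (rs!a) * x (rs!b))"
    by (simp add: sum.reindex_bij_betw[OF bij, symmetric])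
  also have "\<dots> = quad_form (length rs) (\<lambda>a b. C (rs ! a) (rs ! b)) w"
    unfolding quad_form_def by (intro sum.cong refl) (simp add: x_def distinct Least_nth_eq)
  finally show ?thesis unfolding x_def by simp
qed

lemma scalar_prod_mult_mat_vec_eq_quad_form:
  fixes A :: "real mat"
  assumes "A \<in> carrier_mat k k" "v \<in> carrier_vec k"
  shows "v \<bullet> (A *\<^sub>v v) = quad_form k (\<lambda>i j. A $$ (i,j)) (\<lambda>i. v $ i)"
  using assms unfolding quad_form_def
  by (simp add: scalar_prod_def atLeast0LessThan sum_distrib_left algebra_simps)

lemma pos_def_formD:
  assumes "pos_def_form k Q"
  shows pos_def_form_sym: "\<And>i j. i < k \<Longrightarrow> j < k \<Longrightarrow> Q i j = Q j i"
    and pos_def_form_pos: "\<And>u i. i < k \<Longrightarrow> u i \<noteq> 0 \<Longrightarrow> quad_form k Q u > 0"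
  using assms unfolding pos_def_form_def by blast+

lemma pos_def_form_pivot_pos:
  assumes "pos_def_form (Suc k) Q"
  shows "Q k k > 0"
proof -
  have "quad_form (Suc k) Q (\<lambda>i. if i = k then 1 else 0) > 0"
    by (rule pos_def_form_pos[OF assms, of k]) simp_all
  then show ?thesis unfolding quad_form_def by (simp add: if_distrib cong: if_cong)
qed

lemma pos_def_form_schur_last:
  assumes pd: "pos_def_form (Suc k) Q"
  shows "pos_def_form k (schur_last k Q)"
  unfolding pos_def_form_def
proof (intro conjI allI impI)
  note sym = pos_def_form_sym[OF pd]
  show "schur_last k Q i j = schur_last k Q j i" if "i < k" "j < k" for i j
  proof -
    have "Q i j = Q j i" "Q i k = Q k i" "Q k j = Q j k" using that by (auto intro: sym)
    then show ?thesis by (simp add: schur_last_def mult.commute)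
  qed
  fix u :: "nat \<Rightarrow> real"
  assume "\<exists>i<k. u i \<noteq> 0"
  then obtain i where i: "i < k" "u i \<noteq> 0" by blast
  have pivot: "Q k k \<noteq> 0" using pos_def_form_pivot_pos[OF pd] by simp
  txt \<open>Choosing the last coordinate to cancel the square leaves only the Schur part.\<close>
  define u' where "u' = u(k := - (\<Sum>j<k. Q k j * u j) / Q k k)"
  have "quad_form (Suc k) Q u' > 0"
    by (rule pos_def_form_pos[OF pd, of i]) (use i in \<open>auto simp: u'_def\<close>)
  also have "quad_form (Suc k) Q u'
      = quad_form k (schur_last k Q) u' + Q k k * (u' k + (\<Sum>j<k. Q k j * u' j) / Q k k)^2"
    by (rule quad_form_Suc_schur_last) (use sym pivot in auto)
  also have "(\<Sum>j<k. Q k j * u' j) = (\<Sum>j<k. Q k j * u j)"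
    unfolding u'_def by (intro sum.cong) auto
  also have "quad_form k (schur_last k Q) u' = quad_form k (schur_last k Q) u"
    by (rule quad_form_cong) (auto simp: u'_def)
  finally show "quad_form k (schur_last k Q) u > 0" using pivot by (simp add: u'_def)
qed

lemma det_mat_Suc_schur_last:
  assumes pivot: "Q k k \<noteq> 0"
  shows "det (mat (Suc k) (Suc k) (\<lambda>(i,j). Q i j))
       = Q k k * det (mat k k (\<lambda>(i,j). schur_last k Q i j))"
proof -
  define L where "L = mat (Suc k) (Suc k)
    (\<lambda>(i,j). if i = j then 1 else if j = k then Q i k / Q k k else (0::real))"
  define M where "M = mat (Suc k) (Suc k)
    (\<lambda>(i,j). if i < k \<and> j < k then schur_last k Q i j else if i = k then Q k j else (0::real))"
  have LM: "mat (Suc k) (Suc k) (\<lambda>(i,j). Q i j) = L * M"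
  proof (rule eq_matI)
    fix i j assume "i < dim_row (L * M)" and "j < dim_col (L * M)"
    then have i: "i < Suc k" and j: "j < Suc k" by (auto simp: L_def M_def)
    have "(L * M) $$ (i,j) = (\<Sum>l<k. L $$ (i,l) * M $$ (l,j)) + L $$ (i,k) * M $$ (k,j)"
      using i j by (simp add: L_def M_def scalar_prod_def atLeast0LessThan)
    also have "(\<Sum>l<k. L $$ (i,l) * M $$ (l,j)) = (\<Sum>l<k. if l = i then M $$ (i,j) else 0)"
      using i by (intro sum.cong refl) (auto simp: L_def)
    finally show "mat (Suc k) (Suc k) (\<lambda>(i,j). Q i j) $$ (i,j) = (L * M) $$ (i,j)"
      using i j pivot by (auto simp: L_def M_def schur_last_def less_Suc_eq)
  qed (auto simp: L_def M_def)
  have "det L = 1"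
    by (subst det_upper_triangular[of _ "Suc k"])
       (auto simp: upper_triangular_def L_def prod_list_diag_prod)
  have M: "M \<in> carrier_mat (Suc k) (Suc k)" by (simp add: M_def)
  have "det M = (\<Sum>i<Suc k. M $$ (i,k) * cofactor M i k)"
    by (rule laplace_expansion_column[OF M]) simp
  also have "\<dots> = M $$ (k,k) * det (mat_delete M k k)"
    by (simp add: M_def cofactor_def)
  also have "mat_delete M k k = mat k k (\<lambda>(i,j). schur_last k Q i j)"
    by (rule eq_matI) (auto simp: mat_delete_def M_def)
  finally have "det M = Q k k * det (mat k k (\<lambda>(i,j). schur_last k Q i j))"
    by (simp add: M_def)
  moreover have "det (L * M) = det L * det M" by (rule det_mult[of L "Suc k"]) (auto simp: L_def M)
  ultimately show ?thesis unfolding LM using \<open>det L = 1\<close> by simp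
qed

lemma det_pos_if_pos_def_form:
  assumes "pos_def_form k Q"
  shows "det (mat k k (\<lambda>(i,j). Q i j)) > 0"
  using assms
proof (induction k arbitrary: Q)
  case 0
  then show ?case by (simp add: det_def)
next
  case (Suc k)
  have "Q k k > 0" by (rule pos_def_form_pivot_pos[OF Suc.prems])
  moreover have "det (mat k k (\<lambda>(i,j). schur_last k Q i j)) > 0"
    using Suc.IH[OF pos_def_form_schur_last[OF Suc.prems]] by simp
  ultimately show ?case by (simp add: det_mat_Suc_schur_last)
qed

section \<open>Gaussian integrals\<close>

lemma nn_integral_exp_neg_square:
  assumes a: "(a::real) > 0"
  shows "(\<integral>\<^sup>+ t. ennreal (exp (- (a * (t - m)^2) / 2)) \<partial>lborel) = ennreal (sqrt (2 * pi / a))"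
proof -
  have density: "exp (- (a * (t - m)^2) / 2) = sqrt (2 * pi / a) * normal_density m (1 / sqrt a) t" for t
    using a by (simp add: normal_density_def power_divide real_sqrt_divide field_simps)
  have "(\<integral>\<^sup>+ t. ennreal (exp (- (a * (t - m)^2) / 2)) \<partial>lborel)
      = (\<integral>\<^sup>+ t. ennreal (sqrt (2 * pi / a)) * ennreal (normal_density m (1 / sqrt a) t) \<partial>lborel)"
    by (intro nn_integral_cong, subst density, rule ennreal_mult) (use a in auto)
  also have "\<dots> = ennreal (sqrt (2 * pi / a)) * (\<integral>\<^sup>+ t. ennreal (normal_density m (1 / sqrt a) t) \<partial>lborel)"
    by (rule nn_integral_cmult) simp
  also have "(\<integral>\<^sup>+ t. ennreal (normal_density m (1 / sqrt a) t) \<partial>lborel) = 1"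
    using a by (subst nn_integral_eq_integral) (simp_all add: integrable_normal_density integral_normal_density)
  finally show ?thesis by simp
qed

lemma borel_measurable_quad_form [measurable]:
  assumes "{..<k} \<subseteq> I"
  shows "(\<lambda>z. quad_form k Q (\<lambda>i. z i - m i)) \<in> borel_measurable (PiM I (\<lambda>_. lborel))"
proof -
  have "(\<lambda>z. z i) \<in> borel_measurable (PiM I (\<lambda>_. lborel))" if "i < k" for i
    using measurable_component_singleton[of i I "\<lambda>_. lborel"] that assms by auto
  then show ?thesis unfolding quad_form_def
    by (intro borel_measurable_sum borel_measurable_times borel_measurable_diff) auto
qed

lemma nn_integral_exp_neg_quad_form_last:
  assumes pd: "pos_def_form (Suc k) Q"
  shows "(\<integral>\<^sup>+ t. ennreal (exp (- quad_form (Suc k) Q (\<lambda>i. (x(k := t)) i - m i) / 2)) \<partial>lborel)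
      = ennreal (exp (- quad_form k (schur_last k Q) (\<lambda>i. x i - m i) / 2)) * ennreal (sqrt (2 * pi / Q k k))"
proof -
  define a where "a = Q k k"
  define S where "S = schur_last k Q"
  define c where "c = (\<Sum>j<k. Q k j * (x j - m j))"
  have a: "a > 0" unfolding a_def by (rule pos_def_form_pivot_pos[OF pd])
  have sym: "\<And>i. i < k \<Longrightarrow> Q i k = Q k i" using pos_def_form_sym[OF pd] by auto
  have split: "quad_form (Suc k) Q (\<lambda>i. (x(k := t)) i - m i)
      = quad_form k S (\<lambda>i. x i - m i) + a * (t - (m k - c / a))^2" for t
  proof -
    have "quad_form (Suc k) Q (\<lambda>i. (x(k := t)) i - m i)
        = quad_form k S (\<lambda>i. (x(k := t)) i - m i)
          + a * (t - m k + (\<Sum>j<k. Q k j * ((x(k := t)) j - m j)) / a)^2"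
      unfolding S_def a_def by (subst quad_form_Suc_schur_last) (use sym a a_def in auto)
    also have "quad_form k S (\<lambda>i. (x(k := t)) i - m i) = quad_form k S (\<lambda>i. x i - m i)"
      by (rule quad_form_cong) auto
    also have "(\<Sum>j<k. Q k j * ((x(k := t)) j - m j)) = c"
      unfolding c_def by (intro sum.cong) auto
    finally show ?thesis by (simp add: algebra_simps)
  qed
  have "(\<integral>\<^sup>+ t. ennreal (exp (- quad_form (Suc k) Q (\<lambda>i. (x(k := t)) i - m i) / 2)) \<partial>lborel)
     = (\<integral>\<^sup>+ t. ennreal (exp (- quad_form k S (\<lambda>i. x i - m i) / 2))
                * ennreal (exp (- (a * (t - (m k - c / a))^2) / 2)) \<partial>lborel)"
    unfolding split
    by (intro nn_integral_cong, subst ennreal_mult[symmetric])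
       (auto simp: exp_add[symmetric] diff_divide_distrib)
  also have "\<dots> = ennreal (exp (- quad_form k S (\<lambda>i. x i - m i) / 2))
      * (\<integral>\<^sup>+ t. ennreal (exp (- (a * (t - (m k - c / a))^2) / 2)) \<partial>lborel)"
    by (rule nn_integral_cmult) simp
  also have "\<dots> = ennreal (exp (- quad_form k S (\<lambda>i. x i - m i) / 2)) * ennreal (sqrt (2 * pi / a))"
    unfolding nn_integral_exp_neg_square[OF a] ..
  finally show ?thesis unfolding S_def a_def .
qed

text \<open>Fubini: integrating out the last coordinate replaces the form by its Schur complement.\<close>

lemma nn_integral_exp_neg_quad_form:
  assumes "pos_def_form k Q"
  shows "(\<integral>\<^sup>+ z. ennreal (exp (- quad_form k Q (\<lambda>i. z i - m i) / 2)) \<partial>PiM {..<k} (\<lambda>_. lborel))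
       = ennreal (sqrt ((2*pi)^k / det (mat k k (\<lambda>(i,j). Q i j))))"
  using assms
proof (induction k arbitrary: Q)
  case 0
  then show ?case by (simp add: quad_form_def PiM_empty det_def)
next
  case (Suc k)
  interpret product_sigma_finite "\<lambda>_::nat. lborel :: real measure" by standard
  define S where "S = schur_last k Q"
  have a: "Q k k > 0" by (rule pos_def_form_pivot_pos[OF Suc.prems])
  have "{..<Suc k} = insert k {..<k}" by auto
  then have "(\<integral>\<^sup>+ z. ennreal (exp (- quad_form (Suc k) Q (\<lambda>i. z i - m i) / 2)) \<partial>PiM {..<Suc k} (\<lambda>_. lborel))
     = (\<integral>\<^sup>+ x. (\<integral>\<^sup>+ t. ennreal (exp (- quad_form (Suc k) Q (\<lambda>i. (x(k := t)) i - m i) / 2)) \<partial>lborel)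
          \<partial>PiM {..<k} (\<lambda>_. lborel))"
    by (simp only:) (rule product_nn_integral_insert; measurable; auto)
  also have "\<dots> = (\<integral>\<^sup>+ x. ennreal (exp (- quad_form k S (\<lambda>i. x i - m i) / 2)) \<partial>PiM {..<k} (\<lambda>_. lborel))
      * ennreal (sqrt (2 * pi / Q k k))"
    unfolding nn_integral_exp_neg_quad_form_last[OF Suc.prems] S_def
    by (rule nn_integral_multc) measurable
  also have "\<dots> = ennreal (sqrt ((2*pi)^k / det (mat k k (\<lambda>(i,j). S i j))) * sqrt (2 * pi / Q k k))"
    unfolding S_def Suc.IH[OF pos_def_form_schur_last[OF Suc.prems]]
    by (rule ennreal_mult''[symmetric]) (use a in simp)
  also have "sqrt ((2*pi)^k / det (mat k k (\<lambda>(i,j). S i j))) * sqrt (2 * pi / Q k k)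
      = sqrt ((2*pi)^Suc k / det (mat (Suc k) (Suc k) (\<lambda>(i,j). Q i j)))"
    unfolding det_mat_Suc_schur_last[of Q k, folded S_def, OF a[THEN less_imp_neq, symmetric]]
      real_sqrt_mult[symmetric] using a by (simp add: field_simps)
  finally show ?case .
qed

definition pos_def_mat :: "nat \<Rightarrow> real mat \<Rightarrow> bool" where
  "pos_def_mat k Q \<longleftrightarrow> Q \<in> carrier_mat k k \<and> Q\<^sup>T = Q \<and>
     (\<forall>v \<in> carrier_vec k. v \<noteq> 0\<^sub>v k \<longrightarrow> v \<bullet> (Q *\<^sub>v v) > 0)"

lemma pos_def_form_if_pos_def_mat:
  assumes "pos_def_mat k Q"
  shows "pos_def_form k (\<lambda>i j. Q $$ (i,j))"
  unfolding pos_def_form_def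
proof (intro conjI allI impI)
  have Q: "Q \<in> carrier_mat k k" and sym: "Q\<^sup>T = Q" using assms by (auto simp: pos_def_mat_def)
  show "Q $$ (i,j) = Q $$ (j,i)" if "i < k" "j < k" for i j
    using that Q sym by (metis carrier_matD index_transpose_mat(1))
  fix u :: "nat \<Rightarrow> real"
  assume "\<exists>i<k. u i \<noteq> 0"
  then have "vec k u \<noteq> 0\<^sub>v k" by (metis index_vec index_zero_vec(1))
  then have "vec k u \<bullet> (Q *\<^sub>v vec k u) > 0" using assms by (simp add: pos_def_mat_def)
  also have "vec k u \<bullet> (Q *\<^sub>v vec k u) = quad_form k (\<lambda>i j. Q $$ (i,j)) u"
    by (subst scalar_prod_mult_mat_vec_eq_quad_form[OF Q]) (auto intro: quad_form_cong)
  finally show "quad_form k (\<lambda>i j. Q $$ (i,j)) u > 0" .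
qed

lemma mat_index_mat_eq [simp]: "Q \<in> carrier_mat k k \<Longrightarrow> mat k k (\<lambda>ij. Q $$ ij) = Q"
  by (rule eq_matI) auto

lemma det_pos_if_pos_def_mat: "pos_def_mat k Q \<Longrightarrow> det Q > 0"
  using det_pos_if_pos_def_form[OF pos_def_form_if_pos_def_mat] by (simp add: pos_def_mat_def)

lemma integral_exp_neg_quad:
  assumes pd: "pos_def_mat k Q" and m: "m \<in> carrier_vec k"
  shows "(\<integral>z. exp (- (1/2) * ((vec k z - m) \<bullet> (Q *\<^sub>v (vec k z - m)))) \<partial>PiM {..<k} (\<lambda>_. lborel))
        = sqrt ((2*pi)^k / det Q)"
proof -
  have Q: "Q \<in> carrier_mat k k" using pd by (simp add: pos_def_mat_def)
  define q where "q z = quad_form k (\<lambda>i j. Q $$ (i,j)) (\<lambda>i. z i - m $ i)" for z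
  have "(vec k z - m) \<bullet> (Q *\<^sub>v (vec k z - m)) = q z" for z
    unfolding q_def using m
    by (subst scalar_prod_mult_mat_vec_eq_quad_form[OF Q]) (auto intro: quad_form_cong)
  then have "(\<integral>z. exp (- (1/2) * ((vec k z - m) \<bullet> (Q *\<^sub>v (vec k z - m)))) \<partial>PiM {..<k} (\<lambda>_. lborel))
      = enn2real (\<integral>\<^sup>+ z. ennreal (exp (- q z / 2)) \<partial>PiM {..<k} (\<lambda>_. lborel))"
    unfolding q_def by (simp, intro integral_eq_nn_integral) (auto intro!: borel_measurable_exp)
  also have "\<dots> = sqrt ((2*pi)^k / det Q)"
    unfolding q_def nn_integral_exp_neg_quad_form[OF pos_def_form_if_pos_def_mat[OF pd]]
    using Q det_pos_if_pos_def_mat[OF pd] by simp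
  finally show ?thesis .
qed

lemma minv_carrier: "A \<in> carrier_mat n n \<Longrightarrow> minv A \<in> carrier_mat n n"
  unfolding minv_def using mat_inverse(2)[of A n] by (auto split: option.splits)

lemma mult_minv:
  assumes A: "A \<in> carrier_mat n n" and "det A \<noteq> 0"
  shows "A * minv A = 1\<^sub>m n" "minv A * A = 1\<^sub>m n"
proof -
  have "mat_inverse A \<noteq> None"
    using mat_inverse(1)[OF A, where b="()"] det_non_zero_imp_unit[OF A \<open>det A \<noteq> 0\<close>, where b="()"]
    by blast
  then obtain B where "mat_inverse A = Some B" by auto
  with mat_inverse(2)[OF A this] show "A * minv A = 1\<^sub>m n" "minv A * A = 1\<^sub>m n"
    by (auto simp: minv_def)
qed

lemma minv_eq_if_mult_eq_one:
  assumes A: "A \<in> carrier_mat n n" and B: "B \<in> carrier_mat n n" and AB: "A * B = 1\<^sub>m n"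
  shows "minv A = B"
proof -
  have "det A * det B = 1" using det_mult[OF A B] AB by simp
  then have "det A \<noteq> 0" by auto
  have "minv A = minv A * (A * B)" using minv_carrier[OF A] by (simp add: AB)
  also have "\<dots> = (minv A * A) * B" using assoc_mult_mat minv_carrier A B by metis
  also have "\<dots> = B" using mult_minv(2)[OF A \<open>det A \<noteq> 0\<close>] B by simp
  finally show ?thesis .
qed

lemma minv_minv:
  assumes A: "A \<in> carrier_mat n n" and "det A \<noteq> 0"
  shows "minv (minv A) = A"
  by (rule minv_eq_if_mult_eq_one[OF minv_carrier[OF A] A mult_minv(2)[OF assms]])

lemma det_minv:
  assumes A: "A \<in> carrier_mat n n" and "det A \<noteq> 0"
  shows "det (minv A) = 1 / det A"
  using det_mult[OF A minv_carrier[OF A]] mult_minv(1)[OF assms] \<open>det A \<noteq> 0\<close>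
  by (simp add: field_simps)

lemma minv_mat_diag:
  assumes "\<And>i. i < k \<Longrightarrow> d i \<noteq> 0"
  shows "minv (mat_diag k d) = mat_diag k (\<lambda>i. 1 / d i)"
proof (rule minv_eq_if_mult_eq_one)
  show "mat_diag k d * mat_diag k (\<lambda>i. 1 / d i) = 1\<^sub>m k"
    unfolding mat_diag_diag by (rule eq_matI) (auto simp: mat_diag_def assms)
qed auto

lemma mat_diag_mult_vec:
  assumes p: "p \<in> carrier_vec k"
  shows "mat_diag k a *\<^sub>v p = vec k (\<lambda>i. a i * p $ i)"
proof (rule eq_vecI)
  fix i assume "i < dim_vec (vec k (\<lambda>i. a i * p $ i))"
  then have i: "i < k" by simp
  have "(mat_diag k a *\<^sub>v p) $ i = (\<Sum>j<k. (if i = j then a j else 0) * p $ j)"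
    using i p by (simp add: mat_diag_def scalar_prod_def atLeast0LessThan)
  also have "\<dots> = (\<Sum>j<k. if j = i then a i * p $ i else 0)"
    by (intro sum.cong) auto
  finally show "(mat_diag k a *\<^sub>v p) $ i = vec k (\<lambda>i. a i * p $ i) $ i" using i by simp
qed (simp add: mat_diag_def)

lemma scalar_prod_mat_diag:
  fixes a :: "nat \<Rightarrow> real"
  assumes "p \<in> carrier_vec k"
  shows "p \<bullet> (mat_diag k a *\<^sub>v p) = (\<Sum>i<k. a i * (p $ i)^2)"
  using assms unfolding mat_diag_mult_vec[OF assms]
  by (simp add: scalar_prod_def atLeast0LessThan) (rule sum.cong; simp add: power2_eq_square)

lemma scalar_prod_mult_mat_vec_transpose:
  fixes M1 M2 S :: "real mat"
  assumes M1: "M1 \<in> carrier_mat a b1" and M2: "M2 \<in> carrier_mat a b2" and S: "S \<in> carrier_mat a a"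
    and v1: "v1 \<in> carrier_vec b1" and v2: "v2 \<in> carrier_vec b2"
  shows "(M1 *\<^sub>v v1) \<bullet> (S *\<^sub>v (M2 *\<^sub>v v2)) = v1 \<bullet> ((M1\<^sup>T * S * M2) *\<^sub>v v2)"
proof -
  have w: "S *\<^sub>v (M2 *\<^sub>v v2) \<in> carrier_vec a" using S M2 v2 by simp
  have "(M1 *\<^sub>v v1) \<bullet> (S *\<^sub>v (M2 *\<^sub>v v2)) = (M1\<^sup>T *\<^sub>v (S *\<^sub>v (M2 *\<^sub>v v2))) \<bullet> v1"
    using transpose_vec_mult_scalar[OF M1 v1 w] M1 v1 w by (simp add: comm_scalar_prod[of _ a])
  also have "\<dots> = v1 \<bullet> (M1\<^sup>T *\<^sub>v (S *\<^sub>v (M2 *\<^sub>v v2)))"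
    using M1 v1 w by (intro comm_scalar_prod[of _ b1]) auto
  also have "M1\<^sup>T *\<^sub>v (S *\<^sub>v (M2 *\<^sub>v v2)) = (M1\<^sup>T * S * M2) *\<^sub>v v2"
    using M1 M2 S v2 by (simp add: assoc_mult_mat_vec[of _ b1 a _ b2])
  finally show ?thesis .
qed

lemma scalar_prod_sym_mat_commute:
  fixes S :: "real mat"
  assumes S: "S \<in> carrier_mat k k" and sym: "S\<^sup>T = S" and x: "x \<in> carrier_vec k" and y: "y \<in> carrier_vec k"
  shows "y \<bullet> (S *\<^sub>v x) = x \<bullet> (S *\<^sub>v y)"
  using transpose_vec_mult_scalar[OF S x y] S x y unfolding sym by (simp add: comm_scalar_prod[of _ k])

lemma scalar_prod_sym_mat_add:
  fixes S :: "real mat"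
  assumes S: "S \<in> carrier_mat k k" and sym: "S\<^sup>T = S" and a: "a \<in> carrier_vec k" and b: "b \<in> carrier_vec k"
  shows "(a + b) \<bullet> (S *\<^sub>v (a + b)) = a \<bullet> (S *\<^sub>v a) + 2 * (a \<bullet> (S *\<^sub>v b)) + b \<bullet> (S *\<^sub>v b)"
proof -
  have "(a + b) \<bullet> (S *\<^sub>v (a + b)) = a \<bullet> (S *\<^sub>v a) + a \<bullet> (S *\<^sub>v b) + (b \<bullet> (S *\<^sub>v a) + b \<bullet> (S *\<^sub>v b))"
    using S a b by (simp add: mult_add_distrib_mat_vec[OF S a b] add_scalar_prod_distrib[of _ k]
        scalar_prod_add_distrib[of _ k])
  then show ?thesis using scalar_prod_sym_mat_commute[OF S sym a b] by simp
qed

lemma scalar_prod_add_mult_mat_vec: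
  fixes A B :: "real mat"
  assumes "A \<in> carrier_mat k k" "B \<in> carrier_mat k k" "u \<in> carrier_vec k"
  shows "u \<bullet> ((A + B) *\<^sub>v u) = u \<bullet> (A *\<^sub>v u) + u \<bullet> (B *\<^sub>v u)"
  using assms by (simp add: add_mult_distrib_mat_vec[of _ k k] scalar_prod_add_distrib[of _ k])

lemma sandwich_carrier_mat:
  "M \<in> carrier_mat a b \<Longrightarrow> S \<in> carrier_mat a a \<Longrightarrow> M\<^sup>T * S * M \<in> carrier_mat b b"
  by (metis mult_carrier_mat transpose_carrier_mat)

lemma transpose_sandwich_sym:
  fixes M S :: "real mat"
  assumes M: "M \<in> carrier_mat a b" and S: "S \<in> carrier_mat a a" and sym: "S\<^sup>T = S"
  shows "(M\<^sup>T * S * M)\<^sup>T = M\<^sup>T * S * M"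
proof -
  have "(M\<^sup>T * S * M)\<^sup>T = M\<^sup>T * (M\<^sup>T * S)\<^sup>T"
    by (rule transpose_mult[of _ b a _ b]) (use M S in auto)
  also have "(M\<^sup>T * S)\<^sup>T = S * M" using transpose_mult[of "M\<^sup>T" b a S a] M S sym by simp
  also have "M\<^sup>T * (S * M) = M\<^sup>T * S * M" using M S by (simp add: assoc_mult_mat[of _ b a _ a _ b])
  finally show ?thesis .
qed

lemma sum_lessThan_add: "sum f {..<(a::nat) + b} = sum f {..<a} + (\<Sum>i<b. f (a + i))"
  by (induction b) (auto simp: add.assoc)

section \<open>Conditioning a Gaussian given through a block triangular factor\<close>

lemma sum_sq_div_append:
  fixes v w :: "real vec"
  assumes v: "v \<in> carrier_vec np" and w: "w \<in> carrier_vec n"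
  shows "(\<Sum>i<np + n. ((v @\<^sub>v w) $ i)^2 / d i)
       = v \<bullet> (mat_diag np (\<lambda>i. 1 / d i) *\<^sub>v v) + w \<bullet> (mat_diag n (\<lambda>i. 1 / d (np + i)) *\<^sub>v w)"
  unfolding sum_lessThan_add scalar_prod_mat_diag[OF v] scalar_prod_mat_diag[OF w]
  using v w by simp

lemma mult_mat_vec_append_block_lower:
  fixes B :: "real mat"
  assumes B: "B \<in> carrier_mat (np + n) (np + n)"
    and upper: "\<And>i j. i < np \<Longrightarrow> j < n \<Longrightarrow> B $$ (i, np + j) = 0"
    and u: "u \<in> carrier_vec np" and e: "e \<in> carrier_vec n"
  shows "B *\<^sub>v (u @\<^sub>v e) = (mat np np (\<lambda>(i,j). B $$ (i,j)) *\<^sub>v u)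
      @\<^sub>v (mat n np (\<lambda>(i,j). B $$ (np + i, j)) *\<^sub>v u + mat n n (\<lambda>(i,j). B $$ (np + i, np + j)) *\<^sub>v e)"
proof (rule eq_vecI)
  fix i assume "i < dim_vec (mat np np (\<lambda>(i,j). B $$ (i,j)) *\<^sub>v u
      @\<^sub>v (mat n np (\<lambda>(i,j). B $$ (np + i, j)) *\<^sub>v u + mat n n (\<lambda>(i,j). B $$ (np + i, np + j)) *\<^sub>v e))"
  then have i: "i < np + n" by simp
  have "row B i = vec np (\<lambda>j. B $$ (i, j)) @\<^sub>v vec n (\<lambda>j. B $$ (i, np + j))"
    using B i by (intro eq_vecI) auto
  then have "(B *\<^sub>v (u @\<^sub>v e)) $ i
      = vec np (\<lambda>j. B $$ (i, j)) \<bullet> u + vec n (\<lambda>j. B $$ (i, np + j)) \<bullet> e"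
    using B i u e by (simp add: scalar_prod_append[of _ np _ n])
  then show "(B *\<^sub>v (u @\<^sub>v e)) $ i = (mat np np (\<lambda>(i,j). B $$ (i,j)) *\<^sub>v u
      @\<^sub>v (mat n np (\<lambda>(i,j). B $$ (np + i, j)) *\<^sub>v u + mat n n (\<lambda>(i,j). B $$ (np + i, np + j)) *\<^sub>v e)) $ i"
    using i u e upper by (cases "i < np") (auto simp: row_def scalar_prod_def)
qed (use B in simp)

lemma sum_sq_div_block_lower:
  fixes B :: "real mat" and d :: "nat \<Rightarrow> real"
  assumes B: "B \<in> carrier_mat (np + n) (np + n)"
    and upper: "\<And>i j. i < np \<Longrightarrow> j < n \<Longrightarrow> B $$ (i, np + j) = 0"
    and u: "u \<in> carrier_vec np" and e: "e \<in> carrier_vec n"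
  defines "Bp \<equiv> mat np np (\<lambda>(i,j). B $$ (i,j))"
    and "Bop \<equiv> mat n np (\<lambda>(i,j). B $$ (np + i, j))"
    and "Bo \<equiv> mat n n (\<lambda>(i,j). B $$ (np + i, np + j))"
    and "Wp \<equiv> mat_diag np (\<lambda>i. 1 / d i)"
    and "Wo \<equiv> mat_diag n (\<lambda>i. 1 / d (np + i))"
  shows "(\<Sum>i<np + n. ((B *\<^sub>v (u @\<^sub>v e)) $ i)^2 / d i)
     = u \<bullet> ((Bp\<^sup>T * Wp * Bp + Bop\<^sup>T * Wo * Bop) *\<^sub>v u) + 2 * (u \<bullet> ((Bop\<^sup>T * Wo * Bo) *\<^sub>v e))
       + e \<bullet> ((Bo\<^sup>T * Wo * Bo) *\<^sub>v e)"
proof -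
  have Bp: "Bp \<in> carrier_mat np np" and Bop: "Bop \<in> carrier_mat n np" and Bo: "Bo \<in> carrier_mat n n"
    and Wp: "Wp \<in> carrier_mat np np" and Wo: "Wo \<in> carrier_mat n n" and WoT: "Wo\<^sup>T = Wo"
    by (auto simp: Bp_def Bop_def Bo_def Wp_def Wo_def mat_diag_def intro!: eq_matI)
  have "B *\<^sub>v (u @\<^sub>v e) = (Bp *\<^sub>v u) @\<^sub>v (Bop *\<^sub>v u + Bo *\<^sub>v e)"
    unfolding Bp_def Bop_def Bo_def by (rule mult_mat_vec_append_block_lower[OF B upper u e])
  then have "(\<Sum>i<np + n. ((B *\<^sub>v (u @\<^sub>v e)) $ i)^2 / d i)
      = (Bp *\<^sub>v u) \<bullet> (Wp *\<^sub>v (Bp *\<^sub>v u)) + (Bop *\<^sub>v u + Bo *\<^sub>v e) \<bullet> (Wo *\<^sub>v (Bop *\<^sub>v u + Bo *\<^sub>v e))"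
    unfolding Wp_def Wo_def by (simp only:) (rule sum_sq_div_append; use Bp Bop Bo u e in auto)
  also have "(Bop *\<^sub>v u + Bo *\<^sub>v e) \<bullet> (Wo *\<^sub>v (Bop *\<^sub>v u + Bo *\<^sub>v e))
      = (Bop *\<^sub>v u) \<bullet> (Wo *\<^sub>v (Bop *\<^sub>v u)) + 2 * ((Bop *\<^sub>v u) \<bullet> (Wo *\<^sub>v (Bo *\<^sub>v e)))
        + (Bo *\<^sub>v e) \<bullet> (Wo *\<^sub>v (Bo *\<^sub>v e))"
    by (rule scalar_prod_sym_mat_add[OF Wo WoT]) (use Bop Bo u e in auto)
  also have "(Bp *\<^sub>v u) \<bullet> (Wp *\<^sub>v (Bp *\<^sub>v u)) = u \<bullet> ((Bp\<^sup>T * Wp * Bp) *\<^sub>v u)"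
    by (rule scalar_prod_mult_mat_vec_transpose[OF Bp Bp Wp u u])
  also have "(Bop *\<^sub>v u) \<bullet> (Wo *\<^sub>v (Bop *\<^sub>v u)) = u \<bullet> ((Bop\<^sup>T * Wo * Bop) *\<^sub>v u)"
    by (rule scalar_prod_mult_mat_vec_transpose[OF Bop Bop Wo u u])
  also have "(Bop *\<^sub>v u) \<bullet> (Wo *\<^sub>v (Bo *\<^sub>v e)) = u \<bullet> ((Bop\<^sup>T * Wo * Bo) *\<^sub>v e)"
    by (rule scalar_prod_mult_mat_vec_transpose[OF Bop Bo Wo u e])
  also have "(Bo *\<^sub>v e) \<bullet> (Wo *\<^sub>v (Bo *\<^sub>v e)) = e \<bullet> ((Bo\<^sup>T * Wo * Bo) *\<^sub>v e)"
    by (rule scalar_prod_mult_mat_vec_transpose[OF Bo Bo Wo e e])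
  finally show ?thesis
    using scalar_prod_add_mult_mat_vec[OF sandwich_carrier_mat[OF Bp Wp] sandwich_carrier_mat[OF Bop Wo] u]
    by simp
qed

lemma pos_def_mat_gram_sum:
  fixes A C :: "real mat" and a b :: "nat \<Rightarrow> real"
  assumes A: "A \<in> carrier_mat k k" and detA: "det A \<noteq> 0" and C: "C \<in> carrier_mat r k"
    and a: "\<And>i. i < k \<Longrightarrow> a i > 0" and b: "\<And>i. i < r \<Longrightarrow> b i \<ge> 0"
  shows "pos_def_mat k (A\<^sup>T * mat_diag k a * A + C\<^sup>T * mat_diag r b * C)"
  unfolding pos_def_mat_def
proof (intro conjI ballI impI)
  show "A\<^sup>T * mat_diag k a * A + C\<^sup>T * mat_diag r b * C \<in> carrier_mat k k"
    using A C by (intro add_carrier_mat sandwich_carrier_mat) auto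
  have diag_sym: "(mat_diag n f)\<^sup>T = mat_diag n f" for n and f :: "nat \<Rightarrow> real"
    by (rule eq_matI) (auto simp: mat_diag_def)
  show "(A\<^sup>T * mat_diag k a * A + C\<^sup>T * mat_diag r b * C)\<^sup>T = A\<^sup>T * mat_diag k a * A + C\<^sup>T * mat_diag r b * C"
    using transpose_add[OF sandwich_carrier_mat[OF A mat_diag_dim] sandwich_carrier_mat[OF C mat_diag_dim]]
      transpose_sandwich_sym[OF A mat_diag_dim diag_sym] transpose_sandwich_sym[OF C mat_diag_dim diag_sym]
    by simp
  fix v :: "real vec" assume v: "v \<in> carrier_vec k" "v \<noteq> 0\<^sub>v k"
  have "A *\<^sub>v v \<noteq> 0\<^sub>v k" using det_0_iff_vec_prod_zero[OF A] v detA by blast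
  then obtain i where i: "i < k" "(A *\<^sub>v v) $ i \<noteq> 0"
    using A by (metis eq_vecI carrier_matD(1) dim_mult_mat_vec index_zero_vec)
  have "0 < a i * ((A *\<^sub>v v) $ i)^2" using a i by simp
  also have "\<dots> \<le> (\<Sum>i<k. a i * ((A *\<^sub>v v) $ i)^2)"
    by (rule member_le_sum) (use i in \<open>auto intro!: mult_nonneg_nonneg less_imp_le[OF a]\<close>)
  also have "\<dots> \<le> (\<Sum>i<k. a i * ((A *\<^sub>v v) $ i)^2) + (\<Sum>i<r. b i * ((C *\<^sub>v v) $ i)^2)"
    using sum_nonneg[of "{..<r}" "\<lambda>i. b i * ((C *\<^sub>v v) $ i)^2"] b by simp
  also have "\<dots> = (A *\<^sub>v v) \<bullet> (mat_diag k a *\<^sub>v (A *\<^sub>v v)) + (C *\<^sub>v v) \<bullet> (mat_diag r b *\<^sub>v (C *\<^sub>v v))"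
    using A C v by (simp add: scalar_prod_mat_diag)
  also have "\<dots> = v \<bullet> ((A\<^sup>T * mat_diag k a * A) *\<^sub>v v) + v \<bullet> ((C\<^sup>T * mat_diag r b * C) *\<^sub>v v)"
    using A C v
    by (simp add: scalar_prod_mult_mat_vec_transpose[of _ k k] scalar_prod_mult_mat_vec_transpose[of _ r k])
  also have "\<dots> = v \<bullet> ((A\<^sup>T * mat_diag k a * A + C\<^sup>T * mat_diag r b * C) *\<^sub>v v)"
    by (rule scalar_prod_add_mult_mat_vec[symmetric,
          OF sandwich_carrier_mat[OF A mat_diag_dim] sandwich_carrier_mat[OF C mat_diag_dim] v(1)])
  finally show "v \<bullet> ((A\<^sup>T * mat_diag k a * A + C\<^sup>T * mat_diag r b * C) *\<^sub>v v) > 0" .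
qed

lemma quad_complete_square:
  fixes Q :: "real mat"
  assumes Q: "Q \<in> carrier_mat k k" and sym: "Q\<^sup>T = Q" and detQ: "det Q \<noteq> 0"
    and x: "x \<in> carrier_vec k" and F: "F \<in> carrier_vec k" and g: "g \<in> carrier_vec k"
  defines "h \<equiv> minv Q *\<^sub>v g"
  shows "(x - F) \<bullet> (Q *\<^sub>v (x - F)) + 2 * ((x - F) \<bullet> g)
       = (x - (F - h)) \<bullet> (Q *\<^sub>v (x - (F - h))) - h \<bullet> (Q *\<^sub>v h)"
proof -
  have h: "h \<in> carrier_vec k" using minv_carrier[OF Q] g by (simp add: h_def)
  have "Q *\<^sub>v h = g"
    using assoc_mult_mat_vec[OF Q minv_carrier[OF Q] g] mult_minv(1)[OF Q detQ] g
    by (simp add: h_def)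
  moreover have "x - (F - h) = (x - F) + h" by (rule eq_vecI) (use x F h in auto)
  ultimately show ?thesis using scalar_prod_sym_mat_add[OF Q sym _ h, of "x - F"] x F by simp
qed

lemma cond_density_first_gaussian_kernel:
  assumes pd: "pos_def_mat np Q" and mu: "mu \<in> carrier_vec np" and c: "c \<noteq> 0"
    and f: "\<And>x. x \<in> carrier_vec np \<Longrightarrow> f (x @\<^sub>v y) = c * exp (- (1/2) * ((x - mu) \<bullet> (Q *\<^sub>v (x - mu))))"
    and yp: "yp \<in> carrier_vec np"
  shows "cond_density_first np f yp y = mvn_density np mu (minv Q) yp"
proof -
  have Q: "Q \<in> carrier_mat np np" using pd by (simp add: pos_def_mat_def)
  have detQ: "det Q > 0" by (rule det_pos_if_pos_def_mat[OF pd])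
  have "(\<integral>z. f (vec np z @\<^sub>v y) \<partial>PiM {..<np} (\<lambda>_. lborel))
      = (\<integral>z. c * exp (- (1/2) * ((vec np z - mu) \<bullet> (Q *\<^sub>v (vec np z - mu)))) \<partial>PiM {..<np} (\<lambda>_. lborel))"
    by (rule Bochner_Integration.integral_cong) (simp_all only: f vec_carrier)
  also have "\<dots> = c * sqrt ((2*pi)^np / det Q)"
    by (simp only: integral_mult_right_zero integral_exp_neg_quad[OF pd mu])
  finally show ?thesis
    unfolding cond_density_first_def mvn_density_def f[OF yp]
    using c detQ by (simp add: minv_minv[OF Q] det_minv[OF Q])
qed

lemma cond_density_first_block_lower:
  fixes np n :: nat and B :: "real mat" and d :: "nat \<Rightarrow> real" and f :: "real vec \<Rightarrow> real"
    and Fp Fo y :: "real vec"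
  defines "Bp \<equiv> mat np np (\<lambda>(i,j). B $$ (i, j))"
    and "Bop \<equiv> mat n np (\<lambda>(i,j). B $$ (np + i, j))"
    and "Bo \<equiv> mat n n (\<lambda>(i,j). B $$ (np + i, np + j))"
    and "Dp \<equiv> mat_diag np d"
    and "Do \<equiv> mat_diag n (\<lambda>i. d (np + i))"
  defines "Xi \<equiv> minv (Bp\<^sup>T * minv Dp * Bp + Bop\<^sup>T * minv Do * Bop)"
  defines "mu \<equiv> Fp - Xi * Bop\<^sup>T * minv Do * Bo *\<^sub>v (y - Fo)"
  assumes B: "B \<in> carrier_mat (np + n) (np + n)"
    and upper: "\<And>i j. i < np \<Longrightarrow> j < n \<Longrightarrow> B $$ (i, np + j) = 0"
    and Bp_det: "det Bp \<noteq> 0"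
    and d: "\<And>i. i < np + n \<Longrightarrow> d i > 0"
    and c: "c \<noteq> 0"
    and f: "\<And>x. x \<in> carrier_vec (np + n) \<Longrightarrow>
      f x = c * exp (- (\<Sum>i<np + n. ((B *\<^sub>v (x - (Fp @\<^sub>v Fo))) $ i)^2 / d i) / 2)"
    and Fp: "Fp \<in> carrier_vec np" and Fo: "Fo \<in> carrier_vec n"
    and yp: "yp \<in> carrier_vec np" and y: "y \<in> carrier_vec n"
  shows "cond_density_first np f yp y = mvn_density np mu Xi yp"
proof -
  define Wp where "Wp = mat_diag np (\<lambda>i. 1 / d i)"
  define Wo where "Wo = mat_diag n (\<lambda>i. 1 / d (np + i))"
  define Q where "Q = Bp\<^sup>T * Wp * Bp + Bop\<^sup>T * Wo * Bop"
  define G where "G = Bop\<^sup>T * Wo * Bo"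
  define H where "H = Bo\<^sup>T * Wo * Bo"
  have Bp: "Bp \<in> carrier_mat np np" and Bop: "Bop \<in> carrier_mat n np" and Bo: "Bo \<in> carrier_mat n n"
    and Wo: "Wo \<in> carrier_mat n n"
    by (simp_all add: Bp_def Bop_def Bo_def Wo_def)
  have "d i \<noteq> 0" if "i < np + n" for i using d[OF that] by simp
  then have minv_D: "minv Dp = Wp" "minv Do = Wo"
    unfolding Dp_def Do_def Wp_def Wo_def by (intro minv_mat_diag; simp)+
  have pd: "pos_def_mat np Q"
    unfolding Q_def Wp_def Wo_def
    by (rule pos_def_mat_gram_sum[OF Bp Bp_det Bop]) (simp_all add: d less_imp_le)
  then have Q: "Q \<in> carrier_mat np np" and sym: "Q\<^sup>T = Q" and detQ: "det Q \<noteq> 0"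
    using det_pos_if_pos_def_mat[OF pd] by (auto simp: pos_def_mat_def)
  have Xi: "Xi = minv Q" unfolding Xi_def minv_D Q_def ..
  define e0 where "e0 = y - Fo"
  define g where "g = G *\<^sub>v e0"
  define h where "h = minv Q *\<^sub>v g"
  have e0: "e0 \<in> carrier_vec n" using y Fo by (simp add: e0_def)
  have G: "G \<in> carrier_mat np n" unfolding G_def using Bop Bo Wo by simp
  have g: "g \<in> carrier_vec np" using G e0 by (simp add: g_def)
  have BopT: "Bop\<^sup>T \<in> carrier_mat np n" using Bop by simp
  have "Xi * Bop\<^sup>T * Wo * Bo = Xi * G"
    using assoc_mult_mat[OF minv_carrier[OF Q] BopT Wo]
      assoc_mult_mat[OF minv_carrier[OF Q] mult_carrier_mat[OF BopT Wo] Bo]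
    by (simp add: Xi G_def)
  then have mu: "mu = Fp - h"
    unfolding mu_def h_def g_def minv_D e0_def[symmetric] Xi
    using assoc_mult_mat_vec[OF minv_carrier[OF Q] G e0] by simp
  have kernel: "f (x @\<^sub>v y) = c * exp (- (e0 \<bullet> (H *\<^sub>v e0) - h \<bullet> (Q *\<^sub>v h)) / 2)
      * exp (- (1/2) * ((x - mu) \<bullet> (Q *\<^sub>v (x - mu))))" if x: "x \<in> carrier_vec np" for x
  proof -
    have "(x @\<^sub>v y) - (Fp @\<^sub>v Fo) = (x - Fp) @\<^sub>v e0"
      by (rule eq_vecI) (use x y Fp Fo in \<open>auto simp: e0_def\<close>)
    then have "(\<Sum>i<np + n. ((B *\<^sub>v ((x @\<^sub>v y) - (Fp @\<^sub>v Fo))) $ i)^2 / d i)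
        = (x - Fp) \<bullet> (Q *\<^sub>v (x - Fp)) + 2 * ((x - Fp) \<bullet> g) + e0 \<bullet> (H *\<^sub>v e0)"
      unfolding Q_def g_def G_def H_def Wp_def Wo_def Bp_def Bop_def Bo_def
      using sum_sq_div_block_lower[OF B upper _ e0, of "x - Fp"] x Fp by simp
    also have "(x - Fp) \<bullet> (Q *\<^sub>v (x - Fp)) + 2 * ((x - Fp) \<bullet> g)
        = (x - mu) \<bullet> (Q *\<^sub>v (x - mu)) - h \<bullet> (Q *\<^sub>v h)"
      unfolding mu h_def by (rule quad_complete_square[OF Q sym detQ x Fp g])
    finally have "(\<Sum>i<np + n. ((B *\<^sub>v ((x @\<^sub>v y) - (Fp @\<^sub>v Fo))) $ i)^2 / d i)
        = (e0 \<bullet> (H *\<^sub>v e0) - h \<bullet> (Q *\<^sub>v h)) + (x - mu) \<bullet> (Q *\<^sub>v (x - mu))"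
      by simp
    moreover have "x @\<^sub>v y \<in> carrier_vec (np + n)" using x y by simp
    ultimately show ?thesis
      using f by (simp add: exp_add[symmetric] add_divide_distrib) (simp add: field_simps)
  qed
  have "mu \<in> carrier_vec np" using Fp minv_carrier[OF Q] g by (simp add: mu h_def)
  then show ?thesis unfolding Xi
    by (rule cond_density_first_gaussian_kernel[OF pd _ _ kernel yp]) (use c in simp)
qed

section \<open>The Vecchia factors\<close>

lemma sym_psd_sandwich:
  fixes S Z :: "real mat"
  assumes S: "sym_psd q S" and Z: "Z \<in> carrier_mat N q"
  shows "sym_psd N (Z * S * Z\<^sup>T)"
proof -
  have S': "S \<in> carrier_mat q q" "S\<^sup>T = S" and psd: "\<And>v. v \<in> carrier_vec q \<Longrightarrow> v \<bullet> (S *\<^sub>v v) \<ge> 0"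
    using S by (auto simp: sym_psd_def)
  have ZT: "Z\<^sup>T \<in> carrier_mat q N" using Z by simp
  have "Z * S * Z\<^sup>T = (Z\<^sup>T)\<^sup>T * S * Z\<^sup>T" by simp
  also have "sym_psd N \<dots>"
    unfolding sym_psd_def
  proof (intro conjI ballI)
    show "(Z\<^sup>T)\<^sup>T * S * Z\<^sup>T \<in> carrier_mat N N" by (rule sandwich_carrier_mat[OF ZT S'(1)])
    show "((Z\<^sup>T)\<^sup>T * S * Z\<^sup>T)\<^sup>T = (Z\<^sup>T)\<^sup>T * S * Z\<^sup>T" by (rule transpose_sandwich_sym[OF ZT S'])
    fix v :: "real vec" assume v: "v \<in> carrier_vec N"
    have "v \<bullet> (((Z\<^sup>T)\<^sup>T * S * Z\<^sup>T) *\<^sub>v v) = (Z\<^sup>T *\<^sub>v v) \<bullet> (S *\<^sub>v (Z\<^sup>T *\<^sub>v v))"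
      by (rule scalar_prod_mult_mat_vec_transpose[OF ZT ZT S'(1) v v, symmetric])
    then show "v \<bullet> (((Z\<^sup>T)\<^sup>T * S * Z\<^sup>T) *\<^sub>v v) \<ge> 0" using psd ZT v by simp
  qed
  finally show ?thesis .
qed

lemma sym_psd_index_sym:
  "sym_psd N K \<Longrightarrow> p < N \<Longrightarrow> q < N \<Longrightarrow> K $$ (p, q) = K $$ (q, p)"
  unfolding sym_psd_def by (metis carrier_matD index_transpose_mat(1))

lemma quad_form_add_diag_ge:
  fixes K :: "real mat"
  assumes K: "sym_psd N K" and s2: "s2 \<ge> 0" and p: "p < N"
  shows "quad_form N (\<lambda>p q. (K + s2 \<cdot>\<^sub>m 1\<^sub>m N) $$ (p, q)) x \<ge> s2 * (x p)^2"
proof -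
  have Kc: "K \<in> carrier_mat N N" using K by (simp add: sym_psd_def)
  have "quad_form N (\<lambda>p q. K $$ (p, q)) x = vec N x \<bullet> (K *\<^sub>v vec N x)"
    by (subst scalar_prod_mult_mat_vec_eq_quad_form[OF Kc]) (auto intro: quad_form_cong)
  then have psd: "quad_form N (\<lambda>p q. K $$ (p, q)) x \<ge> 0"
    using K by (simp add: sym_psd_def)
  have "quad_form N (\<lambda>p q. (K + s2 \<cdot>\<^sub>m 1\<^sub>m N) $$ (p, q)) x
      = (\<Sum>i<N. \<Sum>j<N. K $$ (i, j) * x i * x j + (if i = j then s2 * x i * x j else 0))"
    unfolding quad_form_def using Kc by (intro sum.cong refl) (auto simp: algebra_simps)
  also have "\<dots> = quad_form N (\<lambda>p q. K $$ (p, q)) x + (\<Sum>i<N. s2 * x i * x i)"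
    unfolding quad_form_def sum.distrib by (simp add: sum.delta)
  also have "(\<Sum>i<N. s2 * x i * x i) \<ge> s2 * x p * x p"
    by (rule member_le_sum) (use p s2 in \<open>auto simp: mult.assoc\<close>)
  ultimately show ?thesis using psd by (simp add: power2_eq_square)
qed

lemma quad_form_sub_add_diag_ge:
  fixes K :: "real mat"
  assumes K: "sym_psd N K" and s2: "s2 \<ge> 0"
    and rs: "distinct rs" "set rs \<subseteq> {..<N}" and a: "a < length rs"
  shows "quad_form (length rs) (\<lambda>a b. (K + s2 \<cdot>\<^sub>m 1\<^sub>m N) $$ (rs ! a, rs ! b)) w \<ge> s2 * (w a)^2"
proof -
  define x where "x = (\<lambda>p. if p \<in> set rs then w (LEAST a. rs ! a = p) else 0)"
  have "x (rs ! a) = w a" using a by (simp add: x_def Least_nth_eq[OF rs(1) a])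
  moreover have "rs ! a < N" using nth_mem[OF a] rs(2) by blast
  ultimately have "s2 * (w a)^2 \<le> quad_form N (\<lambda>p q. (K + s2 \<cdot>\<^sub>m 1\<^sub>m N) $$ (p, q)) x"
    using quad_form_add_diag_ge[OF K s2] by metis
  then show ?thesis
    unfolding quad_form_reindex[OF rs, of "\<lambda>p q. (K + s2 \<cdot>\<^sub>m 1\<^sub>m N) $$ (p, q)"] x_def .
qed

lemma pos_def_mat_sub_mat_add_diag:
  fixes K :: "real mat"
  assumes K: "sym_psd N K" and s2: "s2 > 0" and rs: "distinct rs" "set rs \<subseteq> {..<N}"
  shows "pos_def_mat (length rs) (sub_mat (K + s2 \<cdot>\<^sub>m 1\<^sub>m N) rs rs)"
  unfolding pos_def_mat_def
proof (intro conjI ballI impI)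
  let ?C = "sub_mat (K + s2 \<cdot>\<^sub>m 1\<^sub>m N) rs rs"
  have Kc: "K \<in> carrier_mat N N" using K by (simp add: sym_psd_def)
  have idx: "rs ! a < N" if "a < length rs" for a using nth_mem[OF that] rs(2) by blast
  show C: "?C \<in> carrier_mat (length rs) (length rs)" by (simp add: sub_mat_def)
  show "?C\<^sup>T = ?C"
    by (rule eq_matI) (use Kc idx in \<open>auto simp: sub_mat_def sym_psd_index_sym[OF K]\<close>)
  fix v :: "real vec"
  assume v: "v \<in> carrier_vec (length rs)" "v \<noteq> 0\<^sub>v (length rs)"
  then obtain a where a: "a < length rs" "v $ a \<noteq> 0" by (metis eq_vecI carrier_vecD index_zero_vec)
  have "v \<bullet> (?C *\<^sub>v v) = quad_form (length rs) (\<lambda>a b. (K + s2 \<cdot>\<^sub>m 1\<^sub>m N) $$ (rs ! a, rs ! b)) (\<lambda>a. v $ a)"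
    unfolding scalar_prod_mult_mat_vec_eq_quad_form[OF C v(1)]
    by (rule quad_form_cong) (auto simp: sub_mat_def)
  also have "\<dots> \<ge> s2 * (v $ a)^2"
    by (rule quad_form_sub_add_diag_ge[OF K _ rs a(1)]) (use s2 in simp)
  moreover have "s2 * (v $ a)^2 > 0" using a s2 by simp
  ultimately show "v \<bullet> (?C *\<^sub>v v) > 0" by linarith
qed

lemma
  assumes "Nb i \<subseteq> {..<i}"
  shows set_nbl: "set (nbl Nb i) = Nb i" and distinct_nbl: "distinct (nbl Nb i)"
  using finite_subset[OF assms] by (auto simp: nbl_def)

lemma vecchia_A_carrier: "vecchia_A N K s2 Nb i \<in> carrier_vec (length (nbl Nb i))"
  using minv_carrier[of "sub_mat (K + s2 \<cdot>\<^sub>m 1\<^sub>m N) (nbl Nb i) (nbl Nb i)" "length (nbl Nb i)"]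
  by (simp add: vecchia_A_def Let_def sub_mat_def)

lemma sub_mat_mult_vecchia_A:
  fixes K :: "real mat"
  assumes K: "sym_psd N K" and s2: "s2 > 0" and i: "i < N" and Nb: "Nb i \<subseteq> {..<i}"
  shows "sub_mat (K + s2 \<cdot>\<^sub>m 1\<^sub>m N) (nbl Nb i) (nbl Nb i) *\<^sub>v vecchia_A N K s2 Nb i
       = vec (length (nbl Nb i)) (\<lambda>a. K $$ (i, nbl Nb i ! a))"
proof -
  define ns where "ns = nbl Nb i"
  define C where "C = sub_mat (K + s2 \<cdot>\<^sub>m 1\<^sub>m N) ns ns"
  have "set ns \<subseteq> {..<N}" using Nb i by (auto simp: ns_def set_nbl)
  then have pd: "pos_def_mat (length ns) C"
    unfolding C_def
    by (rule pos_def_mat_sub_mat_add_diag[OF K s2 distinct_nbl[of Nb i, OF Nb, folded ns_def]])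
  then have C: "C \<in> carrier_mat (length ns) (length ns)" and sym: "C\<^sup>T = C" and "det C \<noteq> 0"
    using det_pos_if_pos_def_mat[OF pd] by (auto simp: pos_def_mat_def)
  have "C * (minv C)\<^sup>T = ((minv C) * C)\<^sup>T"
    using transpose_mult[OF minv_carrier[OF C] C] sym by simp
  also have "\<dots> = 1\<^sub>m (length ns)" using mult_minv(2)[OF C \<open>det C \<noteq> 0\<close>] by simp
  finally have inv: "C * (minv C)\<^sup>T = 1\<^sub>m (length ns)" .
  define k where "k = vec (length ns) (\<lambda>a. K $$ (i, ns ! a))"
  have "(minv C)\<^sup>T \<in> carrier_mat (length ns) (length ns)" using minv_carrier[OF C] by simp
  then have "C *\<^sub>v ((minv C)\<^sup>T *\<^sub>v k) = k"
    using assoc_mult_mat_vec[OF C _, of "(minv C)\<^sup>T" _ k] inv by (simp add: k_def)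
  then show ?thesis
    by (simp add: vecchia_A_def Let_def ns_def[symmetric] C_def[symmetric] k_def[symmetric])
qed

text \<open>Since (K + s2 I) restricted to N(i) maps A_i to K_{N(i),i}, the weight w = (-A_i, 1)
  exhibits D_i as a value of the quadratic form of K + s2 I restricted to N(i) and i.\<close>

lemma vecchia_D_eq_quad_form:
  fixes K :: "real mat"
  assumes K: "sym_psd N K" and s2: "s2 > 0" and i: "i < N" and Nb: "Nb i \<subseteq> {..<i}"
  defines "rs \<equiv> nbl Nb i @ [i]"
    and "w \<equiv> \<lambda>a. if a < length (nbl Nb i) then - vecchia_A N K s2 Nb i $ a else 1"
  shows "vecchia_D N K s2 Nb i = quad_form (length rs) (\<lambda>a b. (K + s2 \<cdot>\<^sub>m 1\<^sub>m N) $$ (rs ! a, rs ! b)) w"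
proof -
  define ns where "ns = nbl Nb i"
  define L where "L = length ns"
  define \<alpha> where "\<alpha> = vecchia_A N K s2 Nb i"
  define k where "k = vec L (\<lambda>a. K $$ (i, ns ! a))"
  define C where "C = (\<lambda>a b. (K + s2 \<cdot>\<^sub>m 1\<^sub>m N) $$ (rs ! a, rs ! b))"
  have Kc: "K \<in> carrier_mat N N" using K by (simp add: sym_psd_def)
  have ns_lt: "ns ! a < i" if "a < L" for a
    using that Nb nth_mem[of a ns] by (auto simp: L_def ns_def set_nbl)
  have rs: "rs ! a = (if a < L then ns ! a else i)" if "a \<le> L" for a
    using that by (simp add: rs_def nth_append L_def ns_def)
  have \<alpha>: "\<alpha> \<in> carrier_vec L" unfolding \<alpha>_def L_def ns_def by (rule vecchia_A_carrier)
  have C_ns: "C a b = sub_mat (K + s2 \<cdot>\<^sub>m 1\<^sub>m N) ns ns $$ (a, b)" if "a < L" "b < L" for a b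
    using that ns_lt[OF that(1)] ns_lt[OF that(2)] i Kc by (simp add: C_def rs sub_mat_def L_def)
  have C_col: "C a L = K $$ (i, ns ! a)" "C L a = K $$ (i, ns ! a)" if "a < L" for a
    using that ns_lt[OF that] i Kc sym_psd_index_sym[OF K, of "ns ! a" i] by (simp_all add: C_def rs)
  have "quad_form L C w = quad_form L (\<lambda>a b. sub_mat (K + s2 \<cdot>\<^sub>m 1\<^sub>m N) ns ns $$ (a, b)) (\<lambda>a. \<alpha> $ a)"
    by (subst quad_form_neg[symmetric], rule quad_form_cong) (auto simp: C_ns w_def \<alpha>_def L_def ns_def)
  also have "\<dots> = \<alpha> \<bullet> (sub_mat (K + s2 \<cdot>\<^sub>m 1\<^sub>m N) ns ns *\<^sub>v \<alpha>)"
    by (rule scalar_prod_mult_mat_vec_eq_quad_form[symmetric]) (use \<alpha> in \<open>simp_all add: sub_mat_def L_def\<close>)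
  also have "sub_mat (K + s2 \<cdot>\<^sub>m 1\<^sub>m N) ns ns *\<^sub>v \<alpha> = k"
    using sub_mat_mult_vecchia_A[where Nb = Nb, OF K s2 i Nb]
    by (simp add: \<alpha>_def k_def L_def ns_def)
  finally have quad: "quad_form L C w = \<alpha> \<bullet> k" .
  have w: "w a = - (\<alpha> $ a)" if "a < L" for a using that by (simp add: w_def \<alpha>_def L_def ns_def)
  have "(\<Sum>a<L. - (K $$ (i, ns ! a) * \<alpha> $ a)) = - (\<alpha> \<bullet> k)"
    using \<alpha> by (simp add: k_def scalar_prod_def atLeast0LessThan sum_negf mult.commute)
  then have cross: "(\<Sum>a<L. C a L * w a) = - (\<alpha> \<bullet> k)" "(\<Sum>a<L. C L a * w a) = - (\<alpha> \<bullet> k)"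
    by (auto simp: C_col w k_def intro!: sum.cong)
  have "vec L (\<lambda>a. K $$ (ns ! a, i)) = k"
    using ns_lt i by (intro eq_vecI) (auto simp: k_def intro!: sym_psd_index_sym[OF K] less_trans[of _ i N])
  then have "vecchia_D N K s2 Nb i = K $$ (i, i) + s2 - \<alpha> \<bullet> k"
    by (simp add: vecchia_D_def Let_def \<alpha>_def L_def ns_def)
  also have "\<dots> = quad_form (Suc L) C w"
    unfolding quad_form_Suc quad cross using i Kc by (simp add: C_def rs w_def L_def ns_def)
  finally show ?thesis by (simp add: C_def rs_def L_def ns_def)
qed

lemma vecchia_D_pos:
  fixes K :: "real mat"
  assumes K: "sym_psd N K" and s2: "s2 > 0" and i: "i < N" and Nb: "Nb i \<subseteq> {..<i}"
  shows "vecchia_D N K s2 Nb i > 0"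
proof -
  define rs where "rs = nbl Nb i @ [i]"
  define L where "L = length (nbl Nb i)"
  define w where "w = (\<lambda>a. if a < L then - vecchia_A N K s2 Nb i $ a else 1)"
  have rs: "distinct rs" "set rs \<subseteq> {..<N}"
    using Nb i distinct_nbl[of Nb i, OF Nb] by (auto simp: rs_def set_nbl)
  have "s2 * (w L)^2 \<le> quad_form (length rs) (\<lambda>a b. (K + s2 \<cdot>\<^sub>m 1\<^sub>m N) $$ (rs ! a, rs ! b)) w"
    by (rule quad_form_sub_add_diag_ge[OF K _ rs]) (use s2 in \<open>simp_all add: rs_def L_def\<close>)
  also have "\<dots> = vecchia_D N K s2 Nb i"
    unfolding rs_def w_def L_def
    by (rule vecchia_D_eq_quad_form[where Nb = Nb, OF K s2 i Nb, symmetric])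
  finally show ?thesis using s2 by (simp add: w_def)
qed

lemma vecchia_B_mult_vec_index:
  assumes i: "i < N" and Nb: "Nb i \<subseteq> {..<i}" and w: "w \<in> carrier_vec N"
  shows "(vecchia_B N K s2 Nb *\<^sub>v w) $ i = w $ i - vecchia_A N K s2 Nb i \<bullet> sub_vec w (nbl Nb i)"
proof -
  define ns where "ns = nbl Nb i"
  define A where "A = vecchia_A N K s2 Nb i"
  have A: "A \<in> carrier_vec (length ns)" unfolding A_def ns_def by (rule vecchia_A_carrier)
  have "(vecchia_B N K s2 Nb *\<^sub>v w) $ i = (\<Sum>j<N. vecchia_B N K s2 Nb $$ (i, j) * w $ j)"
    using i w by (simp add: vecchia_B_def scalar_prod_def atLeast0LessThan)
  also have "\<dots> = (\<Sum>j<N. (if j = i then w $ i else 0)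
      - (if j \<in> Nb i then A $ (LEAST a. ns ! a = j) * w $ j else 0))"
    using i Nb by (intro sum.cong refl) (auto simp: vecchia_B_def A_def ns_def)
  also have "\<dots> = w $ i - (\<Sum>j\<in>Nb i. A $ (LEAST a. ns ! a = j) * w $ j)"
    using i Nb by (simp add: sum_subtractf sum.inter_restrict[symmetric] Int_absorb1 subset_trans)
  also have "(\<Sum>j\<in>Nb i. A $ (LEAST a. ns ! a = j) * w $ j) = (\<Sum>a<length ns. A $ a * w $ (ns ! a))"
  proof -
    have "bij_betw ((!) ns) {..<length ns} (Nb i)"
      using distinct_nbl[of Nb i, OF Nb] set_nbl[of Nb i, OF Nb]
      by (simp add: bij_betw_nth lessThan_atLeast0 ns_def)
    then show ?thesis
      by (simp add: sum.reindex_bij_betw[symmetric] Least_nth_eq distinct_nbl[of Nb i, OF Nb, folded ns_def])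
  qed
  also have "\<dots> = A \<bullet> sub_vec w ns"
    using A by (simp add: scalar_prod_def sub_vec_def atLeast0LessThan)
  finally show ?thesis by (simp add: A_def ns_def)
qed

lemma sub_vec_minus:
  assumes "set rs \<subseteq> {..<N}" "x \<in> carrier_vec N" "y \<in> carrier_vec N"
  shows "sub_vec x rs - sub_vec y rs = sub_vec (x - y) rs"
  using assms nth_mem by (intro eq_vecI) (fastforce simp: sub_vec_def)+

lemma vecchia_density_eq:
  assumes Nb: "\<And>i. i < N \<Longrightarrow> Nb i \<subseteq> {..<i}"
    and D: "\<And>i. i < N \<Longrightarrow> vecchia_D N K s2 Nb i > 0"
    and x: "x \<in> carrier_vec N" and F: "F \<in> carrier_vec N"
  shows "vecchia_density N K s2 Nb F x
     = (\<Prod>i<N. 1 / sqrt (2 * pi * vecchia_D N K s2 Nb i))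
       * exp (- (\<Sum>i<N. ((vecchia_B N K s2 Nb *\<^sub>v (x - F)) $ i)^2 / vecchia_D N K s2 Nb i) / 2)"
proof -
  let ?B = "vecchia_B N K s2 Nb" and ?D = "vecchia_D N K s2 Nb"
  have factor: "normal_density (F $ i + vecchia_A N K s2 Nb i \<bullet> (sub_vec x (nbl Nb i) - sub_vec F (nbl Nb i)))
        (sqrt (?D i)) (x $ i)
      = 1 / sqrt (2 * pi * ?D i) * exp (- (((?B *\<^sub>v (x - F)) $ i)^2 / ?D i) / 2)"
    if i: "i < N" for i
  proof -
    have "set (nbl Nb i) \<subseteq> {..<N}" using Nb[OF i] i by (auto simp: set_nbl)
    then have "(?B *\<^sub>v (x - F)) $ i
        = x $ i - (F $ i + vecchia_A N K s2 Nb i \<bullet> (sub_vec x (nbl Nb i) - sub_vec F (nbl Nb i)))"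
      using vecchia_B_mult_vec_index[where Nb = Nb, OF i Nb[OF i], of "x - F"] x F i by (simp add: sub_vec_minus)
    then show ?thesis using D[OF i] by (simp add: normal_density_def power2_commute)
  qed
  have "vecchia_density N K s2 Nb F x
      = (\<Prod>i<N. 1 / sqrt (2 * pi * ?D i) * exp (- (((?B *\<^sub>v (x - F)) $ i)^2 / ?D i) / 2))"
    unfolding vecchia_density_def by (intro prod.cong refl factor) simp
  also have "\<dots> = (\<Prod>i<N. 1 / sqrt (2 * pi * ?D i))
      * (\<Prod>i<N. exp (- (((?B *\<^sub>v (x - F)) $ i)^2 / ?D i) / 2))"
    by (rule prod.distrib)
  also have "(\<Prod>i<N. exp (- (((?B *\<^sub>v (x - F)) $ i)^2 / ?D i) / 2))
      = exp (- (\<Sum>i<N. ((?B *\<^sub>v (x - F)) $ i)^2 / ?D i) / 2)"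
    by (simp add: exp_sum[symmetric] sum_negf sum_divide_distrib)
  finally show ?thesis .
qed

lemma vecchia_B_carrier: "vecchia_B N K s2 Nb \<in> carrier_mat N N"
  by (simp add: vecchia_B_def)

lemma vecchia_B_upper:
  "Nb i \<subseteq> {..<i} \<Longrightarrow> i < j \<Longrightarrow> j < N \<Longrightarrow> vecchia_B N K s2 Nb $$ (i, j) = 0"
  by (auto simp: vecchia_B_def)

lemma det_vecchia_B_leading_block:
  assumes Nb: "\<And>i. i < N \<Longrightarrow> Nb i \<subseteq> {..<i}" and k: "k \<le> N"
  shows "det (mat k k (\<lambda>(i,j). vecchia_B N K s2 Nb $$ (i, j))) = 1"
proof -
  have "det (mat k k (\<lambda>(i,j). vecchia_B N K s2 Nb $$ (i, j)))
      = prod_list (diag_mat (mat k k (\<lambda>(i,j). vecchia_B N K s2 Nb $$ (i, j))))"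
    by (rule det_lower_triangular[of k]) (use k in \<open>auto intro!: vecchia_B_upper Nb\<close>)
  also have "\<dots> = 1" using k by (simp add: prod_list_diag_prod vecchia_B_def)
  finally show ?thesis .
qed

lemma vecchia_Dmat_block:
  "a + k \<le> N \<Longrightarrow> mat k k (\<lambda>(i,j). vecchia_Dmat N K s2 Nb $$ (a + i, a + j))
     = mat_diag k (\<lambda>i. vecchia_D N K s2 Nb (a + i))"
  by (rule eq_matI) (auto simp: vecchia_Dmat_def mat_diag_def)

theorem proposition4:
  fixes np n q :: nat
    and Z :: "real mat"      \<comment> \<open>joint incidence matrix (rows: first the np prediction
                                  locations, then the n observed ones)\<close>
    and Sigma :: "real mat"  \<comment> \<open>covariance of b\<close>
    and s2 :: real           \<comment> \<open>sigma^2\<close>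
    and Nb :: "nat \<Rightarrow> nat set" \<comment> \<open>neighbour sets in the joint ordering (y_p first)\<close>
    and Fp Fo :: "real vec"  \<comment> \<open>F(X_p) and F(X)\<close>
    and yp y :: "real vec"
    and K B D Bp Bop Bo Dp Do Xi :: "real mat" and mu :: "real vec"
  assumes K_def: "K = Z * Sigma * Z\<^sup>T"
      and B_def: "B = vecchia_B (np + n) K s2 Nb"
      and "D = vecchia_Dmat (np + n) K s2 Nb"
      and "Bp = mat np np (\<lambda>(i,j). B $$ (i, j))"
      and "Bop = mat n np (\<lambda>(i,j). B $$ (np + i, j))"
      and "Bo = mat n n (\<lambda>(i,j). B $$ (np + i, np + j))"
      and "Dp = mat np np (\<lambda>(i,j). D $$ (i, j))"
      and "Do = mat n n (\<lambda>(i,j). D $$ (np + i, np + j))"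
      and "Xi = minv (Bp\<^sup>T * minv Dp * Bp + Bop\<^sup>T * minv Do * Bop)"
      and "mu = Fp - Xi * Bop\<^sup>T * minv Do * Bo *\<^sub>v (y - Fo)"
      and "Z \<in> carrier_mat (np + n) q"
      and "sym_psd q Sigma"
      and "s2 > 0"
      and "\<And>i. i < np + n \<Longrightarrow> Nb i \<subseteq> {..<i}"
      and "Fp \<in> carrier_vec np" and "Fo \<in> carrier_vec n"
      and "yp \<in> carrier_vec np" and "y \<in> carrier_vec n"
  shows "cond_density_first np (vecchia_density (np + n) K s2 Nb (Fp @\<^sub>v Fo)) yp y
           = mvn_density np mu Xi yp"
proof -
  note B_blocks = assms(4-6) and D_def = assms(3) and D_blocks = assms(7,8)
    and Xi_def = assms(9) and mu_def = assms(10) and s2 = assms(13) and Nb = assms(14)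
    and vectors = assms(15-18)
  let ?D = "vecchia_D (np + n) K s2 Nb"
  have K: "sym_psd (np + n) K" unfolding K_def by (rule sym_psd_sandwich[OF assms(12,11)])
  have D_pos: "?D i > 0" if "i < np + n" for i by (rule vecchia_D_pos[where Nb = Nb, OF K s2 that Nb[OF that]])
  have Dp: "Dp = mat_diag np ?D" and Do: "Do = mat_diag n (\<lambda>i. ?D (np + i))"
    unfolding D_blocks D_def
    using vecchia_Dmat_block[of 0 np "np + n"] vecchia_Dmat_block[of np n "np + n"] by simp_all
  have B_upper: "vecchia_B (np + n) K s2 Nb $$ (i, np + j) = 0" if "i < np" "j < n" for i j
    using that by (intro vecchia_B_upper Nb) auto
  have B_det: "det (mat np np (\<lambda>(i,j). vecchia_B (np + n) K s2 Nb $$ (i, j))) \<noteq> 0"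
    using det_vecchia_B_leading_block[OF Nb, where k = np] by simp
  have density: "vecchia_density (np + n) K s2 Nb (Fp @\<^sub>v Fo) x
      = (\<Prod>i<np + n. 1 / sqrt (2 * pi * ?D i))
        * exp (- (\<Sum>i<np + n. ((vecchia_B (np + n) K s2 Nb *\<^sub>v (x - (Fp @\<^sub>v Fo))) $ i)^2 / ?D i) / 2)"
    if "x \<in> carrier_vec (np + n)" for x
    by (rule vecchia_density_eq[OF Nb D_pos that]) (use vectors in simp_all)
  have "(\<Prod>i<np + n. 1 / sqrt (2 * pi * ?D i)) > 0" using D_pos by (intro prod_pos) simp
  then have c: "(\<Prod>i<np + n. 1 / sqrt (2 * pi * ?D i)) \<noteq> 0" by linarith
  show ?thesis
    unfolding mu_def Xi_def Dp Do B_blocks B_def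
    by (rule cond_density_first_block_lower[OF vecchia_B_carrier B_upper B_det D_pos c density vectors])
qed

end
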